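(* Under the standing assumptions below, define for each $j\in[d]$ and $c\in\mathbb{R}$ \[ \omega_j(c)=\begin{cases} 0, & c\le -\frac{n}{\sqrt{n+1}},\\[0.3em] \max\Big\{0,\ \hat\mu_j-\hat\sigma_j|c|\sqrt{\frac{(n+1)^2}{n^2-(n+1)c^2}}\Big\}, & -\frac{n}{\sqrt{n+1}}<c<0,\\[0.3em] \hat\mu_j+\hat\sigma_j|c|\sqrt{\frac{(n+1)^2}{n^2-(n+1)c^2}}, & 0\le c<\frac{n}{\sqrt{n+1}},\\[0.3em] +\infty, & c\ge \frac{n}{\sqrt{n+1}}. \end{cases} \] Then each $\omega_j:\mathbb{R}\to[0,\infty]$ is monotonically nondecreasing, and almost surely, for every $c\in\mathbb{R}$, \[ S^{n+1}_{\mathrm{oracle}}\le c\iff 0\le E^{n+1}_j\le \omega_j(c)\ \text{ for all } j\in[d]. \]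
   Context: Setting: $n\ge 2$ and $d\ge 1$ are integers, $[m]:=\{1,\dots,m\}$. $E^1,\dots,E^{n+1}$ are random vectors in $\mathbb{R}^d$ (residual vectors; $E^i=(E^i_1,\dots,E^i_d)$), assumed exchangeable. Assumption A: for each $j\in[d]$, the distribution of $E^i_j$ has no point masses, $E^i_j\ge 0$ almost surely, $\mathbb{E}[E^i_j]<\infty$ and $0<\mathrm{Var}(E^i_j)<\infty$; moreover, for each $j$, the values $E^1_j,\dots,E^{n+1}_j$ are almost surely pairwise distinct. Calibration statistics: $\hat\mu_j=\frac1n\sum_{i=1}^n E^i_j$ and $\hat\sigma_j=\sqrt{\frac1n\sum_{i=1}^n(E^i_j-\hat\mu_j)^2}$. Oracle statistics: $\hat\mu^{\mathrm{oracle}}_j=\frac1{n+1}\sum_{i=1}^{n+1}E^i_j$ and $\hat\sigma^{\mathrm{oracle}}_j=\sqrt{\frac1n\sum_{i=1}^{n+1}(E^i_j-\hat\mu^{\mathrm{oracle}}_j)^2}$. For $t\in\mathbb{R}^d_+$ and $\mu,\sigma\in\mathbb{R}^d$ with $\sigma_j>0$, $\Phi(t;\mu,\sigma):=\max_{1\le j\le d}\frac{t_j-\mu_j}{\sigma_j}$. Oracle scores: $S^i_{\mathrm{oracle}}:=\Phi(E^i;\hat\mu^{\mathrm{oracle}},\hat\sigma^{\mathrm{oracle}})$ for $i\in[n+1]$. *)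

theory Defs
  imports "HOL-Probability.Probability" "HOL-Combinatorics.Permutations"
begin

text \<open>A sample is x :: nat => real^'d, with x i the residual vector E^i (i = 1..n+1);
  components are indexed by the finite type 'd (so d = CARD('d) >= 1).\<close>

definition mu_hat :: "nat \<Rightarrow> (nat \<Rightarrow> real^'d) \<Rightarrow> 'd \<Rightarrow> real" where
  "mu_hat n x j = (\<Sum>i=1..n. x i $ j) / real n"

definition sigma_hat :: "nat \<Rightarrow> (nat \<Rightarrow> real^'d) \<Rightarrow> 'd \<Rightarrow> real" where
  "sigma_hat n x j = sqrt ((\<Sum>i=1..n. (x i $ j - mu_hat n x j)^2) / real n)"

definition mu_oracle :: "nat \<Rightarrow> (nat \<Rightarrow> real^'d) \<Rightarrow> 'd \<Rightarrow> real" where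
  "mu_oracle n x j = (\<Sum>i=1..n+1. x i $ j) / real (n+1)"

definition sigma_oracle :: "nat \<Rightarrow> (nat \<Rightarrow> real^'d) \<Rightarrow> 'd \<Rightarrow> real" where
  "sigma_oracle n x j = sqrt ((\<Sum>i=1..n+1. (x i $ j - mu_oracle n x j)^2) / real n)"

definition Phi :: "real^'d \<Rightarrow> real^'d \<Rightarrow> real^'d \<Rightarrow> real" where
  "Phi t m s = Max (range (\<lambda>j. (t $ j - m $ j) / s $ j))"

definition S_oracle :: "nat \<Rightarrow> (nat \<Rightarrow> real^'d) \<Rightarrow> nat \<Rightarrow> real" where
  "S_oracle n x i = Phi (x i) (\<chi> j. mu_oracle n x j) (\<chi> j. sigma_oracle n x j)"

text \<open>omega_j(c), with mu = mu_hat_j and sigma = sigma_hat_j; values in [0, +infinity].\<close>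
definition omega :: "nat \<Rightarrow> real \<Rightarrow> real \<Rightarrow> real \<Rightarrow> ereal" where
  "omega n m s c =
     (if c \<le> - (real n / sqrt (real n + 1)) then 0
      else if c < 0 then
        ereal (max 0 (m - s * \<bar>c\<bar> * sqrt ((real n + 1)^2 / ((real n)^2 - (real n + 1) * c^2))))
      else if c < real n / sqrt (real n + 1) then
        ereal (m + s * \<bar>c\<bar> * sqrt ((real n + 1)^2 / ((real n)^2 - (real n + 1) * c^2)))
      else \<infinity>)"

definition exchangeable :: "'a measure \<Rightarrow> nat \<Rightarrow> (nat \<Rightarrow> 'a \<Rightarrow> real^'d) \<Rightarrow> bool" where
  "exchangeable M n E \<longleftrightarrow>
     (\<forall>\<pi>. \<pi> permutes {1..n+1} \<longrightarrow>
        distr M (PiM {1..n+1} (\<lambda>_. borel)) (\<lambda>\<omega>. \<lambda>i\<in>{1..n+1}. E (\<pi> i) \<omega>)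
      = distr M (PiM {1..n+1} (\<lambda>_. borel)) (\<lambda>\<omega>. \<lambda>i\<in>{1..n+1}. E i \<omega>))"

end

theory Submission
  imports Defs
begin

(*
  Write d = E^{n+1}_j - mu_j for the gap between the test residual and the calibration mean.
  Adding the test point moves the mean by d/(n+1) and, by the Steiner decomposition of the sum
  of squares, turns sigma_j^2 into sigma_j^2 + d^2/(n+1).  Hence the j-th oracle score of the
  test point is L d / sqrt((n+1) sigma_j^2 + d^2) with L = n/sqrt(n+1): a strictly increasing
  function of d with range (-L, L).  For |c| < L, inverting it gives the threshold
  omega_j(c) - mu_j; outside that range the event is empty or certain.  Clipping at 0 is harmless
  since almost surely E^{n+1}_j > 0 (no atom at 0), and sigma_j > 0 since E^1_j <> E^2_j.
*)

lemma abs_divide_sqrt_add_square_less: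
  fixes a d :: real
  assumes "a > 0"
  shows "\<bar>d / sqrt (a + d\<^sup>2)\<bar> < 1"
proof -
  have "\<bar>d\<bar> = sqrt (d\<^sup>2)" by simp
  also have "\<dots> < sqrt (a + d\<^sup>2)" using assms by (intro real_sqrt_less_mono) simp
  finally have "\<bar>d\<bar> < sqrt (a + d\<^sup>2)" .
  then show ?thesis using assms by (simp add: abs_divide add_pos_nonneg)
qed

lemma divide_sqrt_add_square_less_nonneg:
  fixes a d e :: real
  assumes "a > 0" "0 \<le> d" "d < e"
  shows "d / sqrt (a + d\<^sup>2) < e / sqrt (a + e\<^sup>2)"
proof -
  have pos: "sqrt (a + x\<^sup>2) > 0" for x using assms(1) by (simp add: add_pos_nonneg)
  have "d\<^sup>2 < e\<^sup>2" using assms by (simp add: power_strict_mono)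
  then have "(d * sqrt (a + e\<^sup>2))\<^sup>2 < (e * sqrt (a + d\<^sup>2))\<^sup>2"
    using assms(1) by (simp add: power_mult_distrib add_pos_nonneg algebra_simps)
  then have "d * sqrt (a + e\<^sup>2) < e * sqrt (a + d\<^sup>2)"
    by (rule power_less_imp_less_base) (use assms in auto)
  then show ?thesis using pos[of d] pos[of e] by (simp add: field_simps)
qed

lemma strict_mono_divide_sqrt_add_square:
  fixes a :: real
  assumes "a > 0"
  shows "strict_mono (\<lambda>d. d / sqrt (a + d\<^sup>2))"
proof (rule strict_monoI)
  fix d e :: real assume "d < e"
  consider "0 \<le> d" | "e \<le> 0" | "d < 0" "0 < e" by linarith
  then show "d / sqrt (a + d\<^sup>2) < e / sqrt (a + e\<^sup>2)"
  proof cases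
    case 1 then show ?thesis using divide_sqrt_add_square_less_nonneg assms \<open>d < e\<close> by blast
  next
    case 2
    then have "- e / sqrt (a + (- e)\<^sup>2) < - d / sqrt (a + (- d)\<^sup>2)"
      using divide_sqrt_add_square_less_nonneg assms \<open>d < e\<close> by (metis neg_0_le_iff_le neg_less_iff_less)
    then show ?thesis by simp
  next
    case 3
    have "d / sqrt (a + d\<^sup>2) < 0" "0 < e / sqrt (a + e\<^sup>2)"
      using 3 assms by (simp_all add: add_pos_nonneg divide_neg_pos)
    then show ?thesis by linarith
  qed
qed

lemma divide_sqrt_add_square_inverse:
  fixes a t :: real
  assumes "a > 0" "\<bar>t\<bar> < 1"
  defines "d \<equiv> t * sqrt a / sqrt (1 - t\<^sup>2)"
  shows "d / sqrt (a + d\<^sup>2) = t"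
proof -
  have t2: "t\<^sup>2 < 1" using assms(2) by (simp add: abs_square_less_1)
  have "a + d\<^sup>2 = a / (1 - t\<^sup>2)"
    unfolding d_def using assms(1) t2 by (simp add: power_divide power_mult_distrib field_simps)
  then have "sqrt (a + d\<^sup>2) = sqrt a / sqrt (1 - t\<^sup>2)" by (simp add: real_sqrt_divide)
  then show ?thesis unfolding d_def using assms(1) t2 by simp
qed

lemma divide_sqrt_add_square_le_iff:
  fixes a t d :: real
  assumes "a > 0" "\<bar>t\<bar> < 1"
  shows "d / sqrt (a + d\<^sup>2) \<le> t \<longleftrightarrow> d \<le> t * sqrt a / sqrt (1 - t\<^sup>2)"
  using strict_mono_less_eq[OF strict_mono_divide_sqrt_add_square[OF assms(1)]]
  by (metis divide_sqrt_add_square_inverse[OF assms])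

lemma sum_square_deviation_shift:
  fixes x :: "'a \<Rightarrow> real"
  assumes "finite A" "(\<Sum>i\<in>A. x i) = real (card A) * m"
  shows "(\<Sum>i\<in>A. (x i - c)\<^sup>2) = (\<Sum>i\<in>A. (x i - m)\<^sup>2) + real (card A) * (m - c)\<^sup>2"
proof -
  have "(\<Sum>i\<in>A. (x i - c)\<^sup>2) = (\<Sum>i\<in>A. (x i - m)\<^sup>2 + 2 * (m - c) * (x i - m) + (m - c)\<^sup>2)"
    by (rule sum.cong) (simp_all add: power2_eq_square algebra_simps)
  also have "\<dots> = (\<Sum>i\<in>A. (x i - m)\<^sup>2) + 2 * (m - c) * (\<Sum>i\<in>A. x i - m)
                   + real (card A) * (m - c)\<^sup>2"
    by (simp add: sum.distrib sum_distrib_left)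
  also have "(\<Sum>i\<in>A. x i - m) = 0"
    using assms(2) by (simp add: sum_subtractf)
  finally show ?thesis by simp
qed

lemma mu_oracle_eq:
  assumes "n > 0"
  shows "mu_oracle n x j = (real n * mu_hat n x j + x (n+1) $ j) / (real n + 1)"
  using assms by (simp add: mu_oracle_def mu_hat_def add.commute)

lemma sigma_oracle_eq:
  assumes "n > 0"
  shows "sigma_oracle n x j =
    sqrt ((sigma_hat n x j)\<^sup>2 + (x (n+1) $ j - mu_hat n x j)\<^sup>2 / (real n + 1))"
proof -
  define m where "m = mu_hat n x j"
  define mo where "mo = mu_oracle n x j"
  define d where "d = x (n+1) $ j - m"
  have mo: "mo = m + d / (real n + 1)"
    using mu_oracle_eq[OF assms] unfolding mo_def d_def m_def by (simp add: field_simps)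
  have "(\<Sum>i=1..n. (x i $ j - mo)\<^sup>2) = (\<Sum>i=1..n. (x i $ j - m)\<^sup>2) + real n * (m - mo)\<^sup>2"
    using sum_square_deviation_shift[of "{1..n}" "\<lambda>i. x i $ j" m mo] assms
    unfolding m_def mu_hat_def by simp
  then have "(\<Sum>i=1..n+1. (x i $ j - mo)\<^sup>2)
      = (\<Sum>i=1..n. (x i $ j - m)\<^sup>2) + (real n * (m - mo)\<^sup>2 + (x (n+1) $ j - mo)\<^sup>2)"
    by simp
  also have "real n * (m - mo)\<^sup>2 + (x (n+1) $ j - mo)\<^sup>2 = real n * d\<^sup>2 / (real n + 1)"
  proof -
    have "x (n+1) $ j - mo = real n * d / (real n + 1)"
      unfolding mo d_def by (simp add: field_simps)
    moreover have "real n * (d / (real n + 1))\<^sup>2 + (real n * d / (real n + 1))\<^sup>2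
        = real n * d\<^sup>2 * (real n + 1) / (real n + 1)\<^sup>2"
      by (simp add: power_divide add_divide_distrib algebra_simps power2_eq_square)
    ultimately show ?thesis unfolding mo by (simp add: power2_eq_square)
  qed
  finally show ?thesis
    using assms unfolding sigma_oracle_def sigma_hat_def mo_def[symmetric] m_def[symmetric] d_def[symmetric]
    by (simp add: add_divide_distrib sum_nonneg)
qed

lemma mu_hat_nonneg:
  assumes "\<forall>i\<in>{1..n}. 0 \<le> x i $ j"
  shows "0 \<le> mu_hat n x j"
  unfolding mu_hat_def using assms by (intro divide_nonneg_nonneg sum_nonneg) auto

lemma sigma_hat_pos:
  assumes "i \<in> {1..n}" "k \<in> {1..n}" "x i $ j \<noteq> x k $ j"
  shows "sigma_hat n x j > 0"
proof -
  obtain l where l: "l \<in> {1..n}" "x l $ j \<noteq> mu_hat n x j"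
    using assms by metis
  have "0 < (\<Sum>i=1..n. (x i $ j - mu_hat n x j)\<^sup>2)"
    using l by (intro sum_pos2[of _ l]) auto
  then show ?thesis using l(1) by (simp add: sigma_hat_def)
qed

lemma Phi_le_iff: "Phi t m s \<le> c \<longleftrightarrow> (\<forall>j. (t $ j - m $ j) / s $ j \<le> c)"
  unfolding Phi_def by (subst Max_le_iff) auto

definition score_bound :: "nat \<Rightarrow> real" where
  "score_bound n = real n / sqrt (real n + 1)"

(* The gap E^{n+1}_j - mu_j at which the oracle score equals c, for |c| < score_bound n. *)
definition critical_gap :: "nat \<Rightarrow> real \<Rightarrow> real \<Rightarrow> real" where
  "critical_gap n s c = s * c * sqrt ((real n + 1)\<^sup>2 / ((real n)\<^sup>2 - (real n + 1) * c\<^sup>2))"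

lemma score_bound_pos: "n > 0 \<Longrightarrow> score_bound n > 0"
  by (simp add: score_bound_def)

lemma oracle_score_eq:
  fixes x :: "nat \<Rightarrow> real^'d" and j :: 'd
  assumes "n > 0"
  defines "d \<equiv> x (n+1) $ j - mu_hat n x j"
  shows "(x (n+1) $ j - mu_oracle n x j) / sigma_oracle n x j
    = score_bound n * (d / sqrt ((real n + 1) * (sigma_hat n x j)\<^sup>2 + d\<^sup>2))"
proof -
  have num: "x (n+1) $ j - mu_oracle n x j = real n * d / (real n + 1)"
    unfolding d_def mu_oracle_eq[OF assms(1)] by (simp add: field_simps)
  have den: "sigma_oracle n x j = sqrt ((real n + 1) * (sigma_hat n x j)\<^sup>2 + d\<^sup>2) / sqrt (real n + 1)"
    unfolding sigma_oracle_eq[OF assms(1)] d_def[symmetric] by (simp add: field_simps real_sqrt_divide)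
  define r where "r = sqrt (real n + 1)"
  define S where "S = sqrt ((real n + 1) * (sigma_hat n x j)\<^sup>2 + d\<^sup>2)"
  have "r > 0" "real n + 1 = r * r" by (simp_all add: r_def)
  then have "real n * d / (real n + 1) / (S / r) = real n / r * (d / S)"
    by (cases "S = 0") (simp_all add: field_simps)
  then show ?thesis unfolding num den score_bound_def r_def[symmetric] S_def[symmetric] .
qed

lemma abs_score_less:
  assumes "n > 0" "a > 0"
  shows "\<bar>score_bound n * (d / sqrt (a + d\<^sup>2))\<bar> < score_bound n"
  using mult_strict_left_mono[OF abs_divide_sqrt_add_square_less[OF assms(2)] score_bound_pos[OF assms(1)]]
    score_bound_pos[OF assms(1)]
  by (simp add: abs_mult)

lemma critical_gap_eq:
  assumes "n > 0" "s > 0" "\<bar>c\<bar> < score_bound n"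
  defines "t \<equiv> c / score_bound n"
  shows "critical_gap n s c = t * sqrt ((real n + 1) * s\<^sup>2) / sqrt (1 - t\<^sup>2)"
proof -
  define N where "N = real n"
  have N: "N > 0" using assms(1) by (simp add: N_def)
  have "c\<^sup>2 < (N / sqrt (N + 1))\<^sup>2"
    using assms(3) unfolding score_bound_def N_def[symmetric]
    by (metis abs_ge_zero power2_abs power_strict_mono zero_less_numeral)
  then have D: "N\<^sup>2 - (N + 1) * c\<^sup>2 > 0" using N by (simp add: power_divide field_simps)
  define q where "q = sqrt (N\<^sup>2 - (N + 1) * c\<^sup>2)"
  define r where "r = sqrt (N + 1)"
  have q: "q > 0" using D by (simp add: q_def)
  have r: "r > 0" "N + 1 = r * r" using N by (simp_all add: r_def)
  have "1 - t\<^sup>2 = (N\<^sup>2 - (N + 1) * c\<^sup>2) / N\<^sup>2"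
    unfolding t_def score_bound_def N_def[symmetric] using N by (simp add: power_divide field_simps)
  then have den: "sqrt (1 - t\<^sup>2) = q / N"
    using N by (simp add: real_sqrt_divide q_def)
  have gap: "sqrt ((N + 1)\<^sup>2 / (N\<^sup>2 - (N + 1) * c\<^sup>2)) = (r * r) / q"
    using N r by (simp add: real_sqrt_divide q_def)
  have scale: "sqrt ((N + 1) * s\<^sup>2) = r * s"
    using assms(2) by (simp add: real_sqrt_mult r_def)
  have t: "t = c / (N / r)" by (simp add: t_def score_bound_def N_def r_def)
  show ?thesis
    unfolding critical_gap_def N_def[symmetric] gap scale den unfolding t using N q r(1)
    by (simp add: field_simps)
qed

lemma score_le_iff_le_critical_gap:
  assumes "n > 0" "s > 0" "\<bar>c\<bar> < score_bound n"
  shows "score_bound n * (d / sqrt ((real n + 1) * s\<^sup>2 + d\<^sup>2)) \<le> c \<longleftrightarrow> d \<le> critical_gap n s c"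
proof -
  have L: "score_bound n > 0" using score_bound_pos[OF assms(1)] .
  have t: "\<bar>c / score_bound n\<bar> < 1" using assms(3) L by (simp add: abs_divide)
  have a: "(real n + 1) * s\<^sup>2 > 0" using assms(2) by simp
  show ?thesis
    using divide_sqrt_add_square_le_iff[OF a t, of d] critical_gap_eq[OF assms] L
    by (simp add: mult.commute pos_le_divide_eq)
qed

(* Monotonicity of the inverse for free: the score of critical_gap n s b is at most b <= c. *)
lemma mono_on_critical_gap:
  assumes "n > 0" "s > 0"
  shows "mono_on {- score_bound n<..<score_bound n} (critical_gap n s)"
proof (rule mono_onI)
  fix b c assume b: "b \<in> {- score_bound n<..<score_bound n}" and c: "c \<in> {- score_bound n<..<score_bound n}"
    and "b \<le> c"
  let ?d = "critical_gap n s b"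
  have "\<bar>b\<bar> < score_bound n" "\<bar>c\<bar> < score_bound n" using b c by auto
  note le_iff = score_le_iff_le_critical_gap[OF assms this(1)] score_le_iff_le_critical_gap[OF assms this(2)]
  have "score_bound n * (?d / sqrt ((real n + 1) * s\<^sup>2 + ?d\<^sup>2)) \<le> b"
    using le_iff(1) by simp
  then have "score_bound n * (?d / sqrt ((real n + 1) * s\<^sup>2 + ?d\<^sup>2)) \<le> c"
    using \<open>b \<le> c\<close> by linarith
  then show "?d \<le> critical_gap n s c"
    using le_iff(2) by simp
qed

lemma critical_gap_nonneg:
  assumes "n > 0" "s > 0" "0 \<le> c" "c < score_bound n"
  shows "0 \<le> critical_gap n s c"
proof -
  have "critical_gap n s 0 \<le> critical_gap n s c"
    using mono_onD[OF mono_on_critical_gap[OF assms(1,2)]] assms score_bound_pos[OF assms(1)] by simp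
  then show ?thesis by (simp add: critical_gap_def)
qed

lemma omega_eq:
  assumes "n > 0" "s > 0" "m \<ge> 0"
  shows "omega n m s c =
    (if c \<le> - score_bound n then 0
     else if c < score_bound n then ereal (max 0 (m + critical_gap n s c))
     else \<infinity>)"
proof -
  have "m + critical_gap n s c \<ge> 0" if "0 \<le> c" "c < score_bound n"
    using critical_gap_nonneg[OF assms(1,2) that] assms(3) by simp
  then show ?thesis
    unfolding omega_def score_bound_def[symmetric] by (auto simp: critical_gap_def abs_if)
qed

lemma omega_nonneg:
  assumes "n > 0" "s > 0" "m \<ge> 0"
  shows "0 \<le> omega n m s c"
  by (simp add: omega_eq[OF assms] max_def)

lemma mono_omega:
  assumes "n > 0" "s > 0" "m \<ge> 0"
  shows "mono (omega n m s)"
proof (rule monoI)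
  fix b c :: real assume "b \<le> c"
  have L: "score_bound n > 0" using score_bound_pos[OF assms(1)] .
  consider "score_bound n \<le> c" | "b \<le> - score_bound n" | "- score_bound n < b" "c < score_bound n"
    by linarith
  then show "omega n m s b \<le> omega n m s c"
  proof cases
    case 1
    then show ?thesis using L by (simp add: omega_eq[OF assms])
  next
    case 2
    then show ?thesis using omega_nonneg[OF assms, of c] by (simp add: omega_eq[OF assms])
  next
    case 3
    then have "critical_gap n s b \<le> critical_gap n s c"
      using mono_onD[OF mono_on_critical_gap[OF assms(1,2)]] \<open>b \<le> c\<close> by simp
    then show ?thesis using 3 \<open>b \<le> c\<close> by (simp add: omega_eq[OF assms] max_def)
  qed
qed

lemma score_le_iff_le_omega:
  assumes "n > 0" "s > 0" "m \<ge> 0" "X > 0"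
  shows "score_bound n * ((X - m) / sqrt ((real n + 1) * s\<^sup>2 + (X - m)\<^sup>2)) \<le> c
    \<longleftrightarrow> ereal X \<le> omega n m s c"
    (is "?score \<le> c \<longleftrightarrow> _")
proof -
  have "\<bar>?score\<bar> < score_bound n"
    using abs_score_less[OF assms(1)] assms(2) by simp
  then consider "c \<le> - score_bound n" "\<not> ?score \<le> c" | "score_bound n \<le> c" "?score \<le> c"
    | "\<bar>c\<bar> < score_bound n"
    by linarith
  then show ?thesis
  proof cases
    case 3
    then show ?thesis
      using score_le_iff_le_critical_gap[OF assms(1,2) 3, of "X - m"] assms(4)
      by (auto simp: omega_eq[OF assms(1-3)] max_def)
  qed (use assms(4) score_bound_pos[OF assms(1)] in \<open>simp_all add: omega_eq[OF assms(1-3)]\<close>)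
qed

lemma oracle_score_le_iff_le_omega:
  fixes x :: "nat \<Rightarrow> real^'d"
  assumes "n \<ge> 2" "\<forall>i\<in>{1..n+1}. 0 \<le> x i $ j" "x (n+1) $ j \<noteq> 0" "x 1 $ j \<noteq> x 2 $ j"
  shows "(x (n+1) $ j - mu_oracle n x j) / sigma_oracle n x j \<le> c
    \<longleftrightarrow> ereal (x (n+1) $ j) \<le> omega n (mu_hat n x j) (sigma_hat n x j) c"
proof -
  have n: "n > 0" using assms(1) by simp
  have \<sigma>: "sigma_hat n x j > 0" using assms(1,4) by (intro sigma_hat_pos[of 1 _ 2]) auto
  have "0 \<le> mu_hat n x j" using assms(2) by (intro mu_hat_nonneg) simp
  moreover have "0 < x (n+1) $ j" using assms(2,3) by force
  ultimately show ?thesis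
    unfolding oracle_score_eq[OF n]
    by (rule score_le_iff_le_omega[OF n \<sigma>])
qed

lemma oracle_score_characterisation:
  fixes x :: "nat \<Rightarrow> real^'d"
  assumes "n \<ge> 2" and nonneg: "\<forall>j. \<forall>i\<in>{1..n+1}. 0 \<le> x i $ j"
    and "\<forall>j. x (n+1) $ j \<noteq> 0" "\<forall>j. x 1 $ j \<noteq> x 2 $ j"
  shows "(\<forall>j. mono (omega n (mu_hat n x j) (sigma_hat n x j))
                \<and> (\<forall>c. 0 \<le> omega n (mu_hat n x j) (sigma_hat n x j) c))
         \<and> (\<forall>c. S_oracle n x (n+1) \<le> c \<longleftrightarrow>
               (\<forall>j. 0 \<le> x (n+1) $ j \<and>
                    ereal (x (n+1) $ j) \<le> omega n (mu_hat n x j) (sigma_hat n x j) c))"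
proof -
  have n: "n > 0" using assms(1) by simp
  have \<sigma>: "sigma_hat n x j > 0" and \<mu>: "mu_hat n x j \<ge> 0" for j
    using assms by (auto intro: sigma_hat_pos[of 1 _ 2] mu_hat_nonneg)
  have "(x (n+1) $ j - mu_oracle n x j) / sigma_oracle n x j \<le> c
      \<longleftrightarrow> ereal (x (n+1) $ j) \<le> omega n (mu_hat n x j) (sigma_hat n x j) c" for j c
    using assms by (intro oracle_score_le_iff_le_omega) auto
  moreover have "0 \<le> x (n+1) $ j" for j using nonneg by simp
  ultimately have "S_oracle n x (n+1) \<le> c \<longleftrightarrow>
      (\<forall>j. 0 \<le> x (n+1) $ j \<and> ereal (x (n+1) $ j) \<le> omega n (mu_hat n x j) (sigma_hat n x j) c)" for c
    unfolding S_oracle_def Phi_le_iff by simp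
  then show ?thesis using mono_omega[OF n \<sigma> \<mu>] omega_nonneg[OF n \<sigma> \<mu>] by blast
qed

lemma (in finite_measure) AE_neq_of_measure_eq_0:
  fixes f :: "'a \<Rightarrow> real"
  assumes [measurable]: "f \<in> borel_measurable M" and "measure M {\<omega> \<in> space M. f \<omega> = x} = 0"
  shows "AE \<omega> in M. f \<omega> \<noteq> x"
proof -
  have "{\<omega> \<in> space M. f \<omega> = x} \<in> sets M" by measurable
  then show ?thesis
    using assms(2) by (subst AE_iff_measurable) (auto simp: emeasure_eq_measure)
qed

theorem lemma1:
  fixes M :: "'a measure" and n :: nat and E :: "nat \<Rightarrow> 'a \<Rightarrow> real^'d"
  assumes "prob_space M"
    and "n \<ge> 2"
    and meas: "\<And>i. i \<in> {1..n+1} \<Longrightarrow> E i \<in> borel_measurable M"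
    and exch: "exchangeable M n E"
    and no_atoms: "\<And>i j (x::real). i \<in> {1..n+1} \<Longrightarrow> measure M {\<omega> \<in> space M. E i \<omega> $ j = x} = 0"
    and nonneg: "\<And>i j. i \<in> {1..n+1} \<Longrightarrow> AE \<omega> in M. E i \<omega> $ j \<ge> 0"
    and mean_fin: "\<And>i j. i \<in> {1..n+1} \<Longrightarrow> integrable M (\<lambda>\<omega>. E i \<omega> $ j)"
    and var_fin: "\<And>i j. i \<in> {1..n+1} \<Longrightarrow> integrable M (\<lambda>\<omega>. (E i \<omega> $ j)^2)"
    and var_pos: "\<And>i j. i \<in> {1..n+1} \<Longrightarrow>
        (\<integral>\<omega>. (E i \<omega> $ j - (\<integral>\<omega>'. E i \<omega>' $ j \<partial>M))^2 \<partial>M) > 0"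
    and distinct: "\<And>j. AE \<omega> in M. \<forall>i\<in>{1..n+1}. \<forall>k\<in>{1..n+1}. i \<noteq> k \<longrightarrow> E i \<omega> $ j \<noteq> E k \<omega> $ j"
  shows "AE \<omega> in M.
           (\<forall>j. mono (\<lambda>c. omega n (mu_hat n (\<lambda>i. E i \<omega>) j) (sigma_hat n (\<lambda>i. E i \<omega>) j) c)
                \<and> (\<forall>c. 0 \<le> omega n (mu_hat n (\<lambda>i. E i \<omega>) j) (sigma_hat n (\<lambda>i. E i \<omega>) j) c))
         \<and> (\<forall>c. S_oracle n (\<lambda>i. E i \<omega>) (n+1) \<le> c \<longleftrightarrow>
               (\<forall>j. 0 \<le> E (n+1) \<omega> $ j \<and>
                    ereal (E (n+1) \<omega> $ j) \<le> omega n (mu_hat n (\<lambda>i. E i \<omega>) j) (sigma_hat n (\<lambda>i. E i \<omega>) j) c))"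
proof -
  interpret prob_space M by fact
  have last: "n + 1 \<in> {1..n+1}" and first_two: "1 \<in> {1..n+1}" "2 \<in> {1..n+1}"
    using \<open>n \<ge> 2\<close> by auto
  have "AE \<omega> in M. \<forall>i\<in>{1..n+1}. 0 \<le> E i \<omega> $ j" for j
    using nonneg by (intro AE_finite_allI) auto
  moreover have "AE \<omega> in M. E (n+1) \<omega> $ j \<noteq> 0" for j
    by (intro AE_neq_of_measure_eq_0 measurable_compose[OF meas[OF last] borel_measurable_nth]
        no_atoms[OF last])
  moreover have "AE \<omega> in M. E 1 \<omega> $ j \<noteq> E 2 \<omega> $ j" for j
    using distinct[of j] proof eventually_elim
    case (elim \<omega>)
    show ?case using elim[rule_format, OF first_two] by simp
  qed
  ultimately have "AE \<omega> in M. \<forall>j. \<forall>i\<in>{1..n+1}. 0 \<le> E i \<omega> $ j"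
    "AE \<omega> in M. \<forall>j. E (n+1) \<omega> $ j \<noteq> 0" "AE \<omega> in M. \<forall>j. E 1 \<omega> $ j \<noteq> E 2 \<omega> $ j"
    unfolding AE_all_countable by blast+
  then show ?thesis
    by eventually_elim (rule oracle_score_characterisation[OF \<open>n \<ge> 2\<close>])
qed

end
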